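(* Let $R$ be a commutative ring with identity, ${}_RM$ a finitely generated semisimple $R$-module, and $\varphi:M\to M$ an indecomposable nilpotent element of the ring $\mathrm{Hom}_R(M,M)$, with index of nilpotency $n$ ($\varphi^n=0\ne\varphi^{n-1}$). For $\psi\in\mathrm{Hom}_R(M,M)$ the following are equivalent: (1) $\psi\circ\varphi=\varphi\circ\psi$; (2) there exist $a_1,\dots,a_n\in R$ such that $a_1u+a_2\varphi(u)+\cdots+a_n\varphi^{n-1}(u)=\psi(u)$ for all $u\in M$, i.e. $\psi$ is a polynomial of $\varphi$.
   Context: A nilpotent element $s$ of a ring $S$ is decomposable if $es=se$ for some idempotent $e\in S$ with $0\ne e\ne1$, and indecomposable otherwise. *)

theory Defs
  imports Complex_Main
begin

text \<open>Endomorphisms (elements of Hom_R(M,M)) are the maps f with module_hom scale scale f;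
  the ring structure is pointwise addition and composition, zero is the zero map,
  identity is id.\<close>

definition fin_gen_module :: "('a::comm_ring_1 \<Rightarrow> 'b::ab_group_add \<Rightarrow> 'b) \<Rightarrow> bool" where
  "fin_gen_module scale \<longleftrightarrow> (\<exists>S. finite S \<and> module.span scale S = UNIV)"

definition semisimple_module :: "('a::comm_ring_1 \<Rightarrow> 'b::ab_group_add \<Rightarrow> 'b) \<Rightarrow> bool" where
  "semisimple_module scale \<longleftrightarrow>
     (\<forall>N. module.subspace scale N \<longrightarrow>
        (\<exists>N'. module.subspace scale N' \<and> N \<inter> N' = {0} \<and>
              {x + y | x y. x \<in> N \<and> y \<in> N'} = UNIV))"

definition nilpotent_endo :: "('a::comm_ring_1 \<Rightarrow> 'b::ab_group_add \<Rightarrow> 'b) \<Rightarrow> ('b \<Rightarrow> 'b) \<Rightarrow> bool" where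
  "nilpotent_endo scale s \<longleftrightarrow> module_hom scale scale s \<and> (\<exists>n. s ^^ n = (\<lambda>_. 0))"

definition decomposable_nilpotent :: "('a::comm_ring_1 \<Rightarrow> 'b::ab_group_add \<Rightarrow> 'b) \<Rightarrow> ('b \<Rightarrow> 'b) \<Rightarrow> bool" where
  "decomposable_nilpotent scale s \<longleftrightarrow> nilpotent_endo scale s \<and>
     (\<exists>e. module_hom scale scale e \<and> e \<circ> e = e \<and> e \<noteq> (\<lambda>_. 0) \<and> e \<noteq> id \<and> e \<circ> s = s \<circ> e)"

definition indecomposable_nilpotent :: "('a::comm_ring_1 \<Rightarrow> 'b::ab_group_add \<Rightarrow> 'b) \<Rightarrow> ('b \<Rightarrow> 'b) \<Rightarrow> bool" where
  "indecomposable_nilpotent scale s \<longleftrightarrow> nilpotent_endo scale s \<and> \<not> decomposable_nilpotent scale s"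

end

theory Submission
  imports Defs
begin

text \<open>Semisimplicity yields a vector \<open>c\<close> with \<open>\<phi>^(n-1) c \<noteq> 0\<close> having the same annihilator as
  \<open>\<phi>^(n-1) c\<close>. For such \<open>c\<close> the "coefficient of \<open>\<phi>^(n-1) c\<close>", times \<open>c\<close>, is a well-defined
  linear map on the cyclic submodule \<open>P = R[\<phi>] c\<close>; composing it with a projection onto \<open>P\<close>
  gives \<open>\<theta> : M \<rightarrow> R c\<close>, and \<open>\<pi> = \<Sum>_{i<n} \<phi>^i \<circ> \<theta> \<circ> \<phi>^(n-1-i)\<close> commutes with \<open>\<phi>\<close>, fixes \<open>P\<close> pointwise and
  maps \<open>M\<close> into \<open>P\<close>. Being a nonzero idempotent commuting with \<open>\<phi>\<close>, \<open>\<pi>\<close> is the identity by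
  indecomposability, so \<open>M = P\<close> is cyclic. An endomorphism
  of a cyclic module commuting with \<open>\<phi>\<close> is the polynomial in \<open>\<phi>\<close> it applies to the generator.\<close>

lemma funpow_commute_apply:
  assumes "g \<circ> f = f \<circ> g"
  shows "g ((f ^^ i) x) = (f ^^ i) (g x)"
proof (induction i)
  case (Suc i)
  then show ?case using assms by (simp add: fun_eq_iff)
qed simp

lemma (in module) semisimple_complement:
  assumes "semisimple_module scale" and "subspace N"
  obtains N' where "subspace N'" "N \<inter> N' = {0}" "\<forall>x. \<exists>y\<in>N. \<exists>z\<in>N'. x = y + z"
proof -
  have "\<exists>N'. subspace N' \<and> N \<inter> N' = {0} \<and> {x + y | x y. x \<in> N \<and> y \<in> N'} = UNIV"
    using assms(1)[unfolded semisimple_module_def, rule_format, OF assms(2)] .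
  then obtain N' where "subspace N'" "N \<inter> N' = {0}" and sum: "{x + y | x y. x \<in> N \<and> y \<in> N'} = UNIV"
    by (elim exE conjE)
  moreover have "\<exists>y\<in>N. \<exists>z\<in>N'. x = y + z" for x
  proof -
    have "x \<in> {x + y | x y. x \<in> N \<and> y \<in> N'}" unfolding sum ..
    then show ?thesis by blast
  qed
  ultimately show ?thesis using that by blast
qed

text \<open>Split \<open>v = a v + d\<close> along a complement of \<open>S = {a v | a f v = 0}\<close>: then \<open>f d = f v\<close>, and
  \<open>b f d = 0\<close> puts \<open>b d\<close> both in \<open>S\<close> and in the complement.\<close>
lemma (in module) semisimple_annihilator_lift:
  assumes "semisimple_module scale" and "module_hom scale scale f"
  shows "\<exists>c. f c = f v \<and> (\<forall>b. b *s f c = 0 \<longrightarrow> b *s c = 0)"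
proof -
  interpret f: module_hom scale scale f by fact
  define S where "S = {a *s v | a. a *s f v = 0}"
  have "subspace S"
  proof (rule subspaceI)
    show "0 \<in> S" unfolding S_def by (intro CollectI exI[of _ 0]) simp
  next
    fix x y assume "x \<in> S" "y \<in> S"
    then obtain a b where "x = a *s v" "a *s f v = 0" "y = b *s v" "b *s f v = 0"
      unfolding S_def by blast
    then show "x + y \<in> S"
      unfolding S_def by (intro CollectI exI[of _ "a + b"]) (simp add: scale_left_distrib)
  next
    fix r x assume "x \<in> S"
    then obtain a where "x = a *s v" "a *s f v = 0" unfolding S_def by blast
    then show "r *s x \<in> S"
      unfolding S_def by (intro CollectI exI[of _ "r * a"]) (simp flip: scale_scale)
  qed
  then obtain D where "subspace D" and SD: "S \<inter> D = {0}"
    and "\<forall>x. \<exists>y\<in>S. \<exists>z\<in>D. x = y + z"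
    by (rule semisimple_complement[OF assms(1)])
  then obtain x d where "x \<in> S" and d: "d \<in> D" and "v = x + d" by blast
  then have "d = v - x" by simp
  obtain a where a: "a *s f v = 0" and "x = a *s v" using \<open>x \<in> S\<close> unfolding S_def by blast
  have d_eq: "d = (1 - a) *s v"
    using \<open>d = v - x\<close> \<open>x = a *s v\<close> by (simp add: scale_left_diff_distrib)
  show ?thesis
  proof (intro exI conjI allI impI)
    show fd: "f d = f v" using a by (simp add: d_eq f.scale f.diff scale_left_diff_distrib)
    fix b assume "b *s f d = 0"
    then have "(b * (1 - a)) *s f v = 0"
      using fd by (metis scale_scale scale_left_commute scale_zero_right)
    then have "b *s d \<in> S" unfolding S_def d_eq by auto
    moreover have "b *s d \<in> D" using \<open>subspace D\<close> d by (rule subspace_scale)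
    ultimately show "b *s d = 0" using SD by blast
  qed
qed

lemma (in module) semisimple_projection:
  assumes "semisimple_module scale" and "subspace P"
  obtains p where "module_hom scale scale p" "\<And>x. p x \<in> P" "\<And>x. x \<in> P \<Longrightarrow> p x = x"
proof -
  obtain D where D: "subspace D" and PD: "P \<inter> D = {0}"
    and sum: "\<forall>x. \<exists>y\<in>P. \<exists>z\<in>D. x = y + z"
    by (rule semisimple_complement[OF assms])
  define p where "p x = (SOME y. y \<in> P \<and> x - y \<in> D)" for x
  have p_unique: "p x = y" if "y \<in> P" "x - y \<in> D" for x y
  proof -
    have p: "p x \<in> P \<and> x - p x \<in> D"
      unfolding p_def by (rule someI[of _ y]) (use that in simp)
    have "y - p x \<in> P" using \<open>subspace P\<close> that(1) p by (simp add: subspace_diff)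
    moreover have "(x - p x) - (x - y) \<in> D" using D that(2) p by (blast intro: subspace_diff)
    then have "y - p x \<in> D" by simp
    ultimately have "y - p x = 0" using PD by blast
    then show ?thesis by simp
  qed
  have p_spec: "p x \<in> P \<and> x - p x \<in> D" for x
  proof -
    obtain y z where "x = y + z" "y \<in> P" "z \<in> D" using sum by blast
    then show ?thesis using p_unique[of y x] by simp
  qed
  have "module_hom scale scale p"
    unfolding module_hom_iff
  proof (intro conjI allI)
    show "module scale" by (rule module_axioms)
    then show "module scale" .
    fix x y
    show "p (x + y) = p x + p y"
    proof (rule p_unique)
      show "p x + p y \<in> P" using \<open>subspace P\<close> p_spec by (simp add: subspace_add)
      have "(x - p x) + (y - p y) \<in> D" using D p_spec by (simp add: subspace_add)
      then show "x + y - (p x + p y) \<in> D" by (simp add: algebra_simps)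
    qed
  next
    fix r x
    show "p (r *s x) = r *s p x"
    proof (rule p_unique)
      show "r *s p x \<in> P" using \<open>subspace P\<close> p_spec by (simp add: subspace_scale)
      show "r *s x - r *s p x \<in> D"
        using subspace_scale[OF D p_spec[THEN conjunct2]] by (simp add: scale_right_diff_distrib)
    qed
  qed
  moreover have "x \<in> P \<Longrightarrow> p x = x" for x using D by (simp add: p_unique subspace_0)
  ultimately show ?thesis using that p_spec by blast
qed

locale module_endo = module scale
  for scale :: "'a::comm_ring_1 \<Rightarrow> 'b::ab_group_add \<Rightarrow> 'b" (infixr \<open>*s\<close> 75) +
  fixes \<phi> :: "'b \<Rightarrow> 'b"
  assumes hom: "module_hom scale scale \<phi>"
begin

lemma module_hom_funpow: "module_hom scale scale (\<phi> ^^ i)"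
proof (induction i)
  case (Suc i)
  then show ?case using module_hom_compose[OF Suc hom] by (simp add: o_def)
qed (simp add: module_hom_ident)

lemma funpow_add_apply: "(\<phi> ^^ i) ((\<phi> ^^ j) x) = (\<phi> ^^ (i + j)) x"
  by (simp add: funpow_add)

lemmas funpow_zero [simp] = module_hom.zero[OF module_hom_funpow]
  and funpow_sum = module_hom.sum[OF module_hom_funpow]
  and funpow_scale = module_hom.scale[OF module_hom_funpow]

lemma polynomial_commutes:
  assumes "\<And>u. \<psi> u = (\<Sum>i<n. a i *s (\<phi> ^^ i) u)"
  shows "\<psi> \<circ> \<phi> = \<phi> \<circ> \<psi>"
  by (rule ext) (simp add: assms module_hom.sum[OF hom] module_hom.scale[OF hom] funpow_swap1)

lemma commuting_endo_of_cyclic_is_polynomial: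
  assumes cyclic: "\<And>x. \<exists>a. x = (\<Sum>i<n. a i *s (\<phi> ^^ i) c)"
    and "module_hom scale scale \<psi>" and comm: "\<psi> \<circ> \<phi> = \<phi> \<circ> \<psi>"
  shows "\<exists>b. \<forall>u. (\<Sum>j<n. b j *s (\<phi> ^^ j) u) = \<psi> u"
proof -
  interpret \<psi>: module_hom scale scale \<psi> by fact
  obtain b where b: "\<psi> c = (\<Sum>j<n. b j *s (\<phi> ^^ j) c)" using cyclic by blast
  have "(\<Sum>j<n. b j *s (\<phi> ^^ j) u) = \<psi> u" for u
  proof -
    obtain a where u: "u = (\<Sum>i<n. a i *s (\<phi> ^^ i) c)" using cyclic by blast
    have "\<psi> u = (\<Sum>i<n. \<Sum>j<n. (a i * b j) *s (\<phi> ^^ (i + j)) c)"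
      by (simp add: u b \<psi>.sum \<psi>.scale funpow_commute_apply[OF comm]
          funpow_sum funpow_scale funpow_add_apply scale_sum_right)
    also have "\<dots> = (\<Sum>j<n. \<Sum>i<n. (b j * a i) *s (\<phi> ^^ (j + i)) c)"
      by (subst sum.swap) (simp add: mult.commute add.commute)
    also have "\<dots> = (\<Sum>j<n. b j *s (\<phi> ^^ j) u)"
      by (simp add: u funpow_sum funpow_scale funpow_add_apply scale_sum_right)
    finally show ?thesis by simp
  qed
  then show ?thesis by blast
qed

end

locale nilpotent_of_index = module_endo +
  fixes n :: nat
  assumes nilpotent: "\<phi> ^^ n = (\<lambda>_. 0)"
begin

lemma funpow_ge_index: "n \<le> i \<Longrightarrow> (\<phi> ^^ i) x = 0"
  using funpow_add_apply[of "i - n" n x] nilpotent by simp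

lemma funpow_pred_index_apply: "(\<phi> ^^ (n - 1)) (\<phi> x) = 0"
proof -
  have "(\<phi> ^^ (n - 1)) (\<phi> x) = (\<phi> ^^ Suc (n - 1)) x"
    by (simp only: funpow_Suc_right o_apply)
  then show ?thesis using funpow_ge_index[of "Suc (n - 1)" x] by simp
qed

end

locale nilpotent_cyclic_vector = nilpotent_of_index +
  fixes c :: 'b
  assumes top_nonzero: "(\<phi> ^^ (n - 1)) c \<noteq> 0"
    and top_annihilator: "\<And>b. b *s (\<phi> ^^ (n - 1)) c = 0 \<Longrightarrow> b *s c = 0"
begin

lemma index_pos: "0 < n"
  using funpow_ge_index[of "n - 1" c] top_nonzero by fastforce

definition orbit_comb :: "(nat \<Rightarrow> 'a) \<Rightarrow> 'b" where
  "orbit_comb a = (\<Sum>i<n. a i *s (\<phi> ^^ i) c)"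

definition orbit_span :: "'b set" where
  "orbit_span = range orbit_comb"

text \<open>Apply \<open>\<phi>^(n-1-k)\<close>: the terms \<open>i > k\<close> vanish by nilpotency, the terms \<open>i < k\<close> by induction,
  leaving \<open>a k \<phi>^(n-1) c = 0\<close>.\<close>
lemma orbit_comb_eq_0_coeff:
  assumes "orbit_comb a = 0" and "k < n"
  shows "a k *s c = 0"
  using assms(2)
proof (induction k rule: less_induct)
  case (less k)
  have "(\<phi> ^^ (n - 1 - k)) (orbit_comb a) = (\<Sum>i<n. a i *s (\<phi> ^^ (n - 1 - k + i)) c)"
    by (simp add: orbit_comb_def funpow_sum funpow_scale funpow_add_apply)
  also have "\<dots> = (\<Sum>i<n. if i = k then a k *s (\<phi> ^^ (n - 1)) c else 0)"
  proof (rule sum.cong[OF refl])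
    fix i assume "i \<in> {..<n}"
    consider "i < k" | "i = k" | "k < i" by linarith
    then show "a i *s (\<phi> ^^ (n - 1 - k + i)) c = (if i = k then a k *s (\<phi> ^^ (n - 1)) c else 0)"
    proof cases
      case 1
      then have "a i *s c = 0" using less by simp
      then have "(\<phi> ^^ (n - 1 - k + i)) (a i *s c) = 0" by simp
      then show ?thesis using 1 by (simp add: funpow_scale)
    qed (use less.prems in \<open>simp_all add: funpow_ge_index\<close>)
  qed
  also have "\<dots> = a k *s (\<phi> ^^ (n - 1)) c" using less.prems by simp
  finally show ?case using assms(1) by (intro top_annihilator) simp
qed

lemma orbit_comb_add: "orbit_comb a + orbit_comb b = orbit_comb (\<lambda>i. a i + b i)"
  by (simp add: orbit_comb_def scale_left_distrib sum.distrib)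

lemma orbit_comb_diff: "orbit_comb a - orbit_comb b = orbit_comb (\<lambda>i. a i - b i)"
  by (simp add: orbit_comb_def scale_left_diff_distrib sum_subtractf)

lemma orbit_comb_scale: "r *s orbit_comb a = orbit_comb (\<lambda>i. r * a i)"
  by (simp add: orbit_comb_def scale_sum_right)

lemma orbit_comb_single:
  assumes "j < n"
  shows "orbit_comb (\<lambda>i. if i = j then r else 0) = r *s (\<phi> ^^ j) c"
proof -
  have "orbit_comb (\<lambda>i. if i = j then r else 0) = (\<Sum>i<n. if i = j then r *s (\<phi> ^^ j) c else 0)"
    unfolding orbit_comb_def by (rule sum.cong) auto
  then show ?thesis using assms by simp
qed

lemma funpow_in_orbit_span: "j < n \<Longrightarrow> r *s (\<phi> ^^ j) c \<in> orbit_span"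
  unfolding orbit_span_def by (metis orbit_comb_single rangeI)

lemma subspace_orbit_span: "subspace orbit_span"
  unfolding orbit_span_def
proof (rule subspaceI)
  show "0 \<in> range orbit_comb"
    by (rule range_eqI[of _ _ "\<lambda>_. 0"]) (simp add: orbit_comb_def)
qed (auto simp: orbit_comb_add orbit_comb_scale)

text \<open>The coefficient of \<open>\<phi>^(n-1) c\<close> is determined only modulo the annihilator of \<open>c\<close>, so we
  record its product with \<open>c\<close>, which is well defined by \<open>orbit_comb_eq_0_coeff\<close>. Off
  \<open>orbit_span\<close> the value is an arbitrary choice and never used.\<close>
definition top_coeff :: "'b \<Rightarrow> 'b" where
  "top_coeff x = (SOME y. \<exists>a. x = orbit_comb a \<and> y = a (n - 1) *s c)"

lemma top_coeff_orbit_comb: "top_coeff (orbit_comb a) = a (n - 1) *s c"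
proof -
  have "\<exists>b. orbit_comb a = orbit_comb b \<and> top_coeff (orbit_comb a) = b (n - 1) *s c"
    unfolding top_coeff_def by (rule someI_ex) blast
  then obtain b where "orbit_comb (\<lambda>i. a i - b i) = 0" "top_coeff (orbit_comb a) = b (n - 1) *s c"
    by (metis orbit_comb_diff right_minus_eq)
  moreover have "(a (n - 1) - b (n - 1)) *s c = 0"
    using orbit_comb_eq_0_coeff[OF calculation(1)] index_pos by simp
  ultimately show ?thesis by (simp add: scale_left_diff_distrib)
qed

context
  fixes p :: "'b \<Rightarrow> 'b"
  assumes proj_hom: "module_hom scale scale p"
    and proj_range: "\<And>x. p x \<in> orbit_span"
    and proj_id: "\<And>x. x \<in> orbit_span \<Longrightarrow> p x = x"
begin

definition top_coeff_proj :: "'b \<Rightarrow> 'b" where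
  "top_coeff_proj x = top_coeff (p x)"

lemma module_hom_top_coeff_proj: "module_hom scale scale top_coeff_proj"
  unfolding module_hom_iff
proof (intro conjI allI)
  show "module scale" by (rule module_axioms)
  then show "module scale" .
  fix x y r
  obtain a b where a: "p x = orbit_comb a" and b: "p y = orbit_comb b"
    using proj_range unfolding orbit_span_def by (metis imageE)
  show "top_coeff_proj (x + y) = top_coeff_proj x + top_coeff_proj y"
    using a b unfolding top_coeff_proj_def
    by (simp add: module_hom.add[OF proj_hom] orbit_comb_add top_coeff_orbit_comb scale_left_distrib)
  show "top_coeff_proj (r *s x) = r *s top_coeff_proj x"
    using a unfolding top_coeff_proj_def
    by (simp add: module_hom.scale[OF proj_hom] orbit_comb_scale top_coeff_orbit_comb)
qed

lemmas top_coeff_proj_zero [simp] = module_hom.zero[OF module_hom_top_coeff_proj]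

lemma top_coeff_proj_funpow:
  assumes "j < n"
  shows "top_coeff_proj ((\<phi> ^^ j) c) = (if j = n - 1 then c else 0)"
proof -
  have "(\<phi> ^^ j) c = orbit_comb (\<lambda>i. if i = j then 1 else 0)"
    using orbit_comb_single[OF assms, of 1] by simp
  moreover have "(\<phi> ^^ j) c \<in> orbit_span"
    using funpow_in_orbit_span[OF assms, of 1] by simp
  ultimately show ?thesis
    unfolding top_coeff_proj_def by (simp add: proj_id top_coeff_orbit_comb)
qed

lemma top_coeff_proj_multiple: "\<exists>r. top_coeff_proj x = r *s c"
  using proj_range[of x] unfolding top_coeff_proj_def orbit_span_def
  by (auto simp: top_coeff_orbit_comb)

definition orbit_proj :: "'b \<Rightarrow> 'b" where
  "orbit_proj x = (\<Sum>i<n. (\<phi> ^^ i) (top_coeff_proj ((\<phi> ^^ (n - 1 - i)) x)))"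

lemma module_hom_orbit_proj: "module_hom scale scale orbit_proj"
proof -
  interpret module_pair scale scale by unfold_locales
  have "module_hom scale scale (\<lambda>x. \<Sum>i<n. ((\<phi> ^^ i) \<circ> top_coeff_proj \<circ> (\<phi> ^^ (n - 1 - i))) x)"
    by (rule module_hom_sum[where f = "\<lambda>i. (\<phi> ^^ i) \<circ> top_coeff_proj \<circ> (\<phi> ^^ (n - 1 - i))"])
      (simp_all add: module_axioms module_hom_compose[OF module_hom_funpow
          module_hom_compose[OF module_hom_top_coeff_proj module_hom_funpow]])
  then show ?thesis unfolding orbit_proj_def[abs_def] by simp
qed

lemma orbit_proj_commute: "orbit_proj (\<phi> x) = \<phi> (orbit_proj x)"
proof -
  have n: "{..<n} = {..<Suc (n - 1)}" using index_pos by simp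
  have "orbit_proj (\<phi> x) = (\<Sum>i<n. (\<phi> ^^ i) (top_coeff_proj ((\<phi> ^^ (n - i)) x)))"
    unfolding orbit_proj_def
  proof (rule sum.cong[OF refl])
    fix i assume "i \<in> {..<n}"
    then have "Suc (n - 1 - i) = n - i" by simp
    moreover have "(\<phi> ^^ (n - 1 - i)) (\<phi> x) = (\<phi> ^^ Suc (n - 1 - i)) x"
      by (simp only: funpow_Suc_right o_apply)
    ultimately have "(\<phi> ^^ (n - 1 - i)) (\<phi> x) = (\<phi> ^^ (n - i)) x" by simp
    then show "(\<phi> ^^ i) (top_coeff_proj ((\<phi> ^^ (n - 1 - i)) (\<phi> x)))
        = (\<phi> ^^ i) (top_coeff_proj ((\<phi> ^^ (n - i)) x))" by simp
  qed
  also have "\<dots> = (\<Sum>i<n - 1. (\<phi> ^^ Suc i) (top_coeff_proj ((\<phi> ^^ (n - Suc i)) x)))"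
    unfolding n sum.lessThan_Suc_shift
    by (simp add: funpow_ge_index del: funpow.simps)
  also have "\<dots> = (\<Sum>i<n. \<phi> ((\<phi> ^^ i) (top_coeff_proj ((\<phi> ^^ (n - 1 - i)) x))))"
    unfolding n sum.lessThan_Suc using funpow_pred_index_apply by (simp add: funpow_swap1)
  also have "\<dots> = \<phi> (orbit_proj x)"
    unfolding orbit_proj_def by (simp add: module_hom.sum[OF hom])
  finally show ?thesis .
qed

lemma orbit_proj_funpow:
  assumes "k < n"
  shows "orbit_proj ((\<phi> ^^ k) c) = (\<phi> ^^ k) c"
proof -
  have "orbit_proj ((\<phi> ^^ k) c) = (\<Sum>i<n. if i = k then (\<phi> ^^ k) c else 0)"
    unfolding orbit_proj_def
  proof (rule sum.cong[OF refl])
    fix i assume "i \<in> {..<n}"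
    then show "(\<phi> ^^ i) (top_coeff_proj ((\<phi> ^^ (n - 1 - i)) ((\<phi> ^^ k) c)))
        = (if i = k then (\<phi> ^^ k) c else 0)"
      using assms
      by (cases "n \<le> n - 1 - i + k")
        (auto simp: funpow_add_apply funpow_ge_index top_coeff_proj_funpow)
  qed
  then show ?thesis using assms by simp
qed

lemma orbit_proj_orbit_span: "x \<in> orbit_span \<Longrightarrow> orbit_proj x = x"
  unfolding orbit_span_def orbit_comb_def
  by (auto simp: module_hom.sum[OF module_hom_orbit_proj] module_hom.scale[OF module_hom_orbit_proj]
      orbit_proj_funpow)

lemma orbit_proj_range: "orbit_proj x \<in> orbit_span"
  unfolding orbit_proj_def
proof (rule subspace_sum[OF subspace_orbit_span])
  fix i assume "i \<in> {..<n}"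
  moreover obtain r where "top_coeff_proj ((\<phi> ^^ (n - 1 - i)) x) = r *s c"
    using top_coeff_proj_multiple by blast
  ultimately show "(\<phi> ^^ i) (top_coeff_proj ((\<phi> ^^ (n - 1 - i)) x)) \<in> orbit_span"
    by (simp add: funpow_scale funpow_in_orbit_span)
qed

end

lemma orbit_comb_surj:
  assumes "semisimple_module scale" and "indecomposable_nilpotent scale \<phi>"
  shows "\<exists>a. x = orbit_comb a"
proof -
  obtain p where p: "module_hom scale scale p" "\<And>x. p x \<in> orbit_span"
    "\<And>x. x \<in> orbit_span \<Longrightarrow> p x = x"
    using semisimple_projection[OF assms(1) subspace_orbit_span] by blast
  note orbit_proj = module_hom_orbit_proj[OF p] orbit_proj_range[OF p]
    orbit_proj_orbit_span[OF p] orbit_proj_commute[OF p] orbit_proj_funpow[OF p]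
  have "orbit_proj p \<circ> orbit_proj p = orbit_proj p"
    using orbit_proj(2,3) by auto
  moreover have "orbit_proj p \<noteq> (\<lambda>_. 0)"
    using orbit_proj(5)[of 0] index_pos top_nonzero by force
  moreover have "orbit_proj p \<circ> \<phi> = \<phi> \<circ> orbit_proj p"
    using orbit_proj(4) by auto
  ultimately have "orbit_proj p = id"
    using assms(2) orbit_proj(1)
    unfolding indecomposable_nilpotent_def decomposable_nilpotent_def by blast
  then show ?thesis using orbit_proj(2)[of x] unfolding orbit_span_def by auto
qed

end

theorem corollary4p9:
  fixes scale :: "'a::comm_ring_1 \<Rightarrow> 'b::ab_group_add \<Rightarrow> 'b"
    and \<phi> \<psi> :: "'b \<Rightarrow> 'b" and n :: nat
  assumes "module scale"
    and "fin_gen_module scale"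
    and "semisimple_module scale"
    and "module_hom scale scale \<phi>"
    and "indecomposable_nilpotent scale \<phi>"
    and "\<phi> ^^ n = (\<lambda>_. 0)" and "\<phi> ^^ (n - 1) \<noteq> (\<lambda>_. 0)"
    and "module_hom scale scale \<psi>"
  shows "\<psi> \<circ> \<phi> = \<phi> \<circ> \<psi> \<longleftrightarrow>
         (\<exists>a :: nat \<Rightarrow> 'a. \<forall>u. (\<Sum>i<n. scale (a i) ((\<phi> ^^ i) u)) = \<psi> u)"
proof -
  interpret nilpotent_of_index scale \<phi> n
    by (simp add: nilpotent_of_index_def nilpotent_of_index_axioms_def module_endo_def
        module_endo_axioms_def assms)
  obtain v where "(\<phi> ^^ (n - 1)) v \<noteq> 0" using assms(7) by auto
  then obtain c where "(\<phi> ^^ (n - 1)) c \<noteq> 0"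
    and "\<forall>b. scale b ((\<phi> ^^ (n - 1)) c) = 0 \<longrightarrow> scale b c = 0"
    using semisimple_annihilator_lift[OF assms(3) module_hom_funpow, of "n - 1" v] by metis
  then interpret nilpotent_cyclic_vector scale \<phi> n c
    by unfold_locales auto
  have cyclic: "\<exists>a. x = (\<Sum>i<n. scale (a i) ((\<phi> ^^ i) c))" for x
    using orbit_comb_surj[OF assms(3,5)] unfolding orbit_comb_def .
  show ?thesis
  proof
    assume "\<psi> \<circ> \<phi> = \<phi> \<circ> \<psi>"
    then show "\<exists>a. \<forall>u. (\<Sum>i<n. scale (a i) ((\<phi> ^^ i) u)) = \<psi> u"
      by (rule commuting_endo_of_cyclic_is_polynomial[OF cyclic assms(8)])
  next
    assume "\<exists>a. \<forall>u. (\<Sum>i<n. scale (a i) ((\<phi> ^^ i) u)) = \<psi> u"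
    then show "\<psi> \<circ> \<phi> = \<phi> \<circ> \<psi>" by (metis polynomial_commutes)
  qed
qed

end
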